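(* Let $\tilde L$ be a minimum-size counterexample. Then every join-irreducible element $j$ of $\tilde L$ satisfies $|{\uparrow}j|>\ell(\tilde L)$.
   Context: The length $\ell(L)$ of a finite lattice $L$ is one less than the maximum number of elements of a chain (totally ordered subset) in $L$. For a poset $P$, $x$ upper covers $y$ if $y<x$ with nothing strictly between; join-irreducible: upper covers exactly one element. For $x\in P$, ${\uparrow}x=\{y: x\le y\}$. A counterexample is a finite lattice $L$ with $|L|>1$ in which every join-irreducible $j$ satisfies $|{\uparrow}j|>|L|/2$; a minimum-size counterexample is a counterexample $\tilde L$ such that no counterexample has fewer elements. *)

theory Defs
  imports Main
begin

definition is_lub :: "'a set \<Rightarrow> ('a \<Rightarrow> 'a \<Rightarrow> bool) \<Rightarrow> 'a \<Rightarrow> 'a \<Rightarrow> 'a \<Rightarrow> bool" where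
  "is_lub L le x y z \<longleftrightarrow> z \<in> L \<and> le x z \<and> le y z \<and>
     (\<forall>w\<in>L. le x w \<and> le y w \<longrightarrow> le z w)"

definition is_glb :: "'a set \<Rightarrow> ('a \<Rightarrow> 'a \<Rightarrow> bool) \<Rightarrow> 'a \<Rightarrow> 'a \<Rightarrow> 'a \<Rightarrow> bool" where
  "is_glb L le x y z \<longleftrightarrow> z \<in> L \<and> le z x \<and> le z y \<and>
     (\<forall>w\<in>L. le w x \<and> le w y \<longrightarrow> le w z)"

definition finite_lattice :: "'a set \<Rightarrow> ('a \<Rightarrow> 'a \<Rightarrow> bool) \<Rightarrow> bool" where
  "finite_lattice L le \<longleftrightarrow> finite L \<and> L \<noteq> {} \<and>
     (\<forall>x\<in>L. le x x) \<and>
     (\<forall>x\<in>L. \<forall>y\<in>L. le x y \<and> le y x \<longrightarrow> x = y) \<and>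
     (\<forall>x\<in>L. \<forall>y\<in>L. \<forall>z\<in>L. le x y \<and> le y z \<longrightarrow> le x z) \<and>
     (\<forall>x\<in>L. \<forall>y\<in>L. (\<exists>z. is_lub L le x y z) \<and> (\<exists>z. is_glb L le x y z))"

definition lt :: "('a \<Rightarrow> 'a \<Rightarrow> bool) \<Rightarrow> 'a \<Rightarrow> 'a \<Rightarrow> bool" where
  "lt le x y \<longleftrightarrow> le x y \<and> x \<noteq> y"

definition upper_covers :: "'a set \<Rightarrow> ('a \<Rightarrow> 'a \<Rightarrow> bool) \<Rightarrow> 'a \<Rightarrow> 'a \<Rightarrow> bool" where
  "upper_covers L le x y \<longleftrightarrow> x \<in> L \<and> y \<in> L \<and> lt le y x \<and>
     \<not> (\<exists>z\<in>L. lt le y z \<and> lt le z x)"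

definition join_irreducible :: "'a set \<Rightarrow> ('a \<Rightarrow> 'a \<Rightarrow> bool) \<Rightarrow> 'a \<Rightarrow> bool" where
  "join_irreducible L le x \<longleftrightarrow> x \<in> L \<and> card {y \<in> L. upper_covers L le x y} = 1"

definition up_set :: "'a set \<Rightarrow> ('a \<Rightarrow> 'a \<Rightarrow> bool) \<Rightarrow> 'a \<Rightarrow> 'a set" where
  "up_set L le x = {y \<in> L. le x y}"

definition is_chain :: "'a set \<Rightarrow> ('a \<Rightarrow> 'a \<Rightarrow> bool) \<Rightarrow> 'a set \<Rightarrow> bool" where
  "is_chain L le C \<longleftrightarrow> C \<subseteq> L \<and> (\<forall>x\<in>C. \<forall>y\<in>C. le x y \<or> le y x)"

definition lattice_length :: "'a set \<Rightarrow> ('a \<Rightarrow> 'a \<Rightarrow> bool) \<Rightarrow> nat" where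
  "lattice_length L le = Max {card C | C. is_chain L le C} - 1"

definition counterexample :: "'a set \<Rightarrow> ('a \<Rightarrow> 'a \<Rightarrow> bool) \<Rightarrow> bool" where
  "counterexample L le \<longleftrightarrow> finite_lattice L le \<and> card L > 1 \<and>
     (\<forall>j. join_irreducible L le j \<longrightarrow> 2 * card (up_set L le j) > card L)"

text \<open>Minimality is measured against all counterexamples; every finite lattice is
  isomorphic to one carried by a set of naturals, so quantifying over lattices on nat
  covers all finite lattices up to isomorphism.\<close>
definition min_counterexample :: "'a set \<Rightarrow> ('a \<Rightarrow> 'a \<Rightarrow> bool) \<Rightarrow> bool" where
  "min_counterexample L le \<longleftrightarrow> counterexample L le \<and>
     (\<forall>(M :: nat set) leM. counterexample M leM \<longrightarrow> card L \<le> card M)"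

end

theory Submission
  imports Defs
begin

text \<open>Let l be the length of L. Take a longest chain, with top t and second element c, and let
  m be a minimal element not below c. Everything strictly below m lies below c, so the join of
  any two lower covers of m is below c, hence strictly below m, hence equal to both covers:
  m is join-irreducible. The up-set of m meets the chain only in t, so it has at most |L| - l
  elements. In a counterexample it has more than |L|/2 elements, so |L| > 2l, and then every
  join-irreducible j satisfies |up j| > |L|/2 > l.\<close>

lemma finite_ex_minimal:
  assumes "finite S" "x \<in> S"
    and antisymmetric: "\<And>x y. x \<in> S \<Longrightarrow> y \<in> S \<Longrightarrow> r x y \<Longrightarrow> r y x \<Longrightarrow> x = y"
    and transitive: "\<And>x y z. x \<in> S \<Longrightarrow> y \<in> S \<Longrightarrow> z \<in> S \<Longrightarrow> r x y \<Longrightarrow> r y z \<Longrightarrow> r x z"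
  obtains m where "m \<in> S" "\<And>y. y \<in> S \<Longrightarrow> r y m \<Longrightarrow> y = m"
proof -
  define R where "R = {(y, z). y \<in> S \<and> z \<in> S \<and> r y z \<and> y \<noteq> z}"
  have "R \<subseteq> S \<times> S" by (auto simp: R_def)
  then have "finite R" using finite_cartesian_product[OF \<open>finite S\<close> \<open>finite S\<close>]
    by (rule finite_subset)
  moreover have "trans R"
  proof (rule transI)
    fix x y z assume "(x, y) \<in> R" "(y, z) \<in> R"
    then have "x \<in> S" "y \<in> S" "z \<in> S" "r x y" "r y z" "y \<noteq> z" by (auto simp: R_def)
    then have "r x z" "x \<noteq> z" using transitive[of x y z] antisymmetric[of y z] by auto
    then show "(x, z) \<in> R" using \<open>x \<in> S\<close> \<open>z \<in> S\<close> by (simp add: R_def)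
  qed
  then have "acyclic R" by (simp add: acyclic_def R_def)
  ultimately have "wf R" by (rule finite_acyclic_wf)
  then obtain m where "m \<in> S" and m_min: "\<And>y. (y, m) \<in> R \<Longrightarrow> y \<notin> S"
    using \<open>x \<in> S\<close> by (rule wfE_min) iprover
  show thesis
  proof (rule that)
    show "m \<in> S" by fact
    fix y assume "y \<in> S" "r y m"
    moreover have "(y, m) \<notin> R" using m_min \<open>y \<in> S\<close> by blast
    ultimately show "y = m" using \<open>m \<in> S\<close> by (simp add: R_def)
  qed
qed

locale finite_lattice_on =
  fixes L :: "'a set" and le :: "'a \<Rightarrow> 'a \<Rightarrow> bool"
  assumes finite_lattice: "finite_lattice L le"
begin

lemma finite_carrier: "finite L"
  and refl_le: "x \<in> L \<Longrightarrow> le x x"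
  and antisym_le: "x \<in> L \<Longrightarrow> y \<in> L \<Longrightarrow> le x y \<Longrightarrow> le y x \<Longrightarrow> x = y"
  and trans_le: "x \<in> L \<Longrightarrow> y \<in> L \<Longrightarrow> z \<in> L \<Longrightarrow> le x y \<Longrightarrow> le y z \<Longrightarrow> le x z"
  and ex_lub: "x \<in> L \<Longrightarrow> y \<in> L \<Longrightarrow> \<exists>u. is_lub L le x y u"
  and ex_glb: "x \<in> L \<Longrightarrow> y \<in> L \<Longrightarrow> \<exists>u. is_glb L le x y u"
  using finite_lattice unfolding finite_lattice_def by blast+

lemma ex_minimal:
  assumes "S \<subseteq> L" "x \<in> S"
  obtains m where "m \<in> S" "\<And>y. y \<in> S \<Longrightarrow> le y m \<Longrightarrow> y = m"
proof (rule finite_ex_minimal[of S x le])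
  show "finite S" using assms(1) finite_carrier by (rule finite_subset)
  show "x \<in> S" by fact
  show "y = z" if "y \<in> S" "z \<in> S" "le y z" "le z y" for y z
    using that assms(1) antisym_le by blast
  show "le y w" if "y \<in> S" "z \<in> S" "w \<in> S" "le y z" "le z w" for y z w
    using that assms(1) trans_le[of y z w] by blast
qed (rule that)

lemma ex_maximal:
  assumes "S \<subseteq> L" "x \<in> S"
  obtains m where "m \<in> S" "\<And>y. y \<in> S \<Longrightarrow> le m y \<Longrightarrow> y = m"
proof (rule finite_ex_minimal[of S x "\<lambda>y z. le z y"])
  show "finite S" using assms(1) finite_carrier by (rule finite_subset)
  show "x \<in> S" by fact
  show "y = z" if "y \<in> S" "z \<in> S" "le z y" "le y z" for y z
    using that assms(1) antisym_le by blast
  show "le w y" if "y \<in> S" "z \<in> S" "w \<in> S" "le z y" "le w z" for y z w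
    using that assms(1) trans_le[of w z y] by blast
qed (rule that)

lemma ex_chain_card_length:
  obtains C where "is_chain L le C" "card C = lattice_length L le + 1"
proof -
  define CS where "CS = {card C | C. is_chain L le C}"
  have "CS \<subseteq> {..card L}"
    using finite_carrier by (auto simp: CS_def is_chain_def intro: card_mono)
  then have "finite CS" by (rule finite_subset) simp
  obtain x where "x \<in> L" using finite_lattice by (auto simp: finite_lattice_def)
  then have "is_chain L le {x}" by (simp add: is_chain_def refl_le)
  then have "1 \<in> CS" by (force simp: CS_def)
  then have "Max CS \<in> CS" "1 \<le> Max CS" using \<open>finite CS\<close> by (auto intro: Max_in Max_ge)
  have "\<exists>C. is_chain L le C \<and> card C = Max CS"
    using \<open>Max CS \<in> CS\<close> unfolding CS_def mem_Collect_eq by metis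
  then obtain C where chain: "is_chain L le C" and "card C = Max CS" by blast
  then have "card C = lattice_length L le + 1"
    using \<open>1 \<le> Max CS\<close> by (simp add: lattice_length_def CS_def)
  with chain show thesis by (rule that)
qed

lemma ex_lower_cover:
  assumes "m \<in> L" "y \<in> L" "lt le y m"
  obtains a where "upper_covers L le m a"
proof -
  have "{z \<in> L. lt le z m} \<subseteq> L" "y \<in> {z \<in> L. lt le z m}" using assms by auto
  then obtain a where "a \<in> {z \<in> L. lt le z m}"
    and "\<And>z. z \<in> {z \<in> L. lt le z m} \<Longrightarrow> le a z \<Longrightarrow> z = a"
    by (rule ex_maximal) iprover
  then have "upper_covers L le m a"
    using \<open>m \<in> L\<close> by (auto simp: upper_covers_def lt_def)
  then show thesis by (rule that)
qed

lemma upper_covers_eqI: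
  assumes "upper_covers L le m a" "u \<in> L" "le a u" "lt le u m"
  shows "a = u"
  using assms by (auto simp: upper_covers_def lt_def)

lemma join_irreducible_if_lower_set_below:
  assumes "c \<in> L" "m \<in> L" "\<not> le m c"
    and below: "\<And>y. y \<in> L \<Longrightarrow> lt le y m \<Longrightarrow> le y c"
  shows "join_irreducible L le m"
proof -
  obtain z where "is_glb L le m c z" using ex_glb assms by blast
  then have "z \<in> L" "lt le z m" using assms by (auto simp: is_glb_def lt_def)
  then obtain a where a: "upper_covers L le m a" using ex_lower_cover \<open>m \<in> L\<close> by blast
  have "a \<in> L" using a by (simp add: upper_covers_def)
  have unique: "b = a" if b: "upper_covers L le m b" for b
  proof -
    have "b \<in> L" "le a c" "le b c"
      using a b below by (auto simp: upper_covers_def)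
    with \<open>a \<in> L\<close> obtain u where u: "is_lub L le a b u" using ex_lub by blast
    then have "u \<in> L" "le a u" "le b u" "le u c" using \<open>le a c\<close> \<open>le b c\<close> \<open>c \<in> L\<close>
      by (auto simp: is_lub_def)
    moreover have "lt le u m"
      using u a b \<open>m \<in> L\<close> \<open>le u c\<close> \<open>\<not> le m c\<close> by (auto simp: is_lub_def upper_covers_def lt_def)
    ultimately show "b = a" using upper_covers_eqI a b by metis
  qed
  then have "{y \<in> L. upper_covers L le m y} = {a}"
    using a \<open>a \<in> L\<close> unique by blast
  then show ?thesis using \<open>m \<in> L\<close> by (simp add: join_irreducible_def)
qed

lemma chain_ex_top_two:
  assumes chain: "is_chain L le C" and "2 \<le> card C"
  obtains t c where "t \<in> C" "c \<in> C" "\<not> le t c" "\<And>y. y \<in> C \<Longrightarrow> y \<noteq> t \<Longrightarrow> le y c"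
proof -
  have "C \<subseteq> L" and total: "\<And>x y. x \<in> C \<Longrightarrow> y \<in> C \<Longrightarrow> le x y \<or> le y x"
    using chain by (auto simp: is_chain_def)
  obtain x where "x \<in> C" using \<open>2 \<le> card C\<close> by fastforce
  with \<open>C \<subseteq> L\<close> obtain t where "t \<in> C" and t_max: "\<And>y. y \<in> C \<Longrightarrow> le t y \<Longrightarrow> y = t"
    by (rule ex_maximal) iprover
  have "C - {t} \<subseteq> L" using \<open>C \<subseteq> L\<close> by blast
  moreover have "card (C - {t}) \<noteq> 0" using \<open>t \<in> C\<close> \<open>2 \<le> card C\<close> by simp
  then obtain x' where "x' \<in> C - {t}" by (metis card.empty ex_in_conv)
  ultimately obtain c where "c \<in> C - {t}" and c_max: "\<And>y. y \<in> C - {t} \<Longrightarrow> le c y \<Longrightarrow> y = c"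
    by (rule ex_maximal) iprover
  show thesis
  proof (rule that)
    show "t \<in> C" "c \<in> C" using \<open>t \<in> C\<close> \<open>c \<in> C - {t}\<close> by auto
    show "\<not> le t c" using t_max[of c] \<open>c \<in> C - {t}\<close> by auto
    show "le y c" if "y \<in> C" "y \<noteq> t" for y
      using that c_max[of y] \<open>c \<in> C - {t}\<close> total[of y c] by auto
  qed
qed

lemma chain_ex_join_irreducible_small_up_set:
  assumes chain: "is_chain L le C" and "2 \<le> card C"
  obtains m where "join_irreducible L le m" "card (up_set L le m) + card C \<le> card L + 1"
proof -
  have "C \<subseteq> L" using chain by (simp add: is_chain_def)
  obtain t c where "t \<in> C" "c \<in> C" "\<not> le t c" and below_c: "\<And>y. y \<in> C \<Longrightarrow> y \<noteq> t \<Longrightarrow> le y c"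
    using chain_ex_top_two[OF assms] by blast
  then have "c \<in> L" "t \<in> L" using \<open>C \<subseteq> L\<close> by auto
  then have "{y \<in> L. \<not> le y c} \<subseteq> L" "t \<in> {y \<in> L. \<not> le y c}" using \<open>\<not> le t c\<close> by auto
  then obtain m where "m \<in> {y \<in> L. \<not> le y c}"
    and m_min: "\<And>y. y \<in> {y \<in> L. \<not> le y c} \<Longrightarrow> le y m \<Longrightarrow> y = m"
    by (rule ex_minimal) iprover
  then have "m \<in> L" "\<not> le m c" by auto
  have ji: "join_irreducible L le m"
  proof (rule join_irreducible_if_lower_set_below[OF \<open>c \<in> L\<close> \<open>m \<in> L\<close> \<open>\<not> le m c\<close>])
    fix y assume "y \<in> L" "lt le y m"
    then show "le y c" using m_min[of y] by (auto simp: lt_def)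
  qed
  have "up_set L le m \<subseteq> L - (C - {t})"
  proof
    fix y assume "y \<in> up_set L le m"
    then have "y \<in> L" "le m y" by (auto simp: up_set_def)
    moreover have "y \<notin> C - {t}"
      using below_c[of y] trans_le[of m y c] \<open>m \<in> L\<close> \<open>c \<in> L\<close> \<open>y \<in> L\<close> \<open>le m y\<close> \<open>\<not> le m c\<close>
      by blast
    ultimately show "y \<in> L - (C - {t})" by blast
  qed
  then have "card (up_set L le m) \<le> card (L - (C - {t}))"
    using finite_carrier by (intro card_mono) auto
  also have "\<dots> = card L - (card C - 1)"
    using \<open>C \<subseteq> L\<close> \<open>t \<in> C\<close> finite_carrier by (subst card_Diff_subset) (auto intro: finite_subset)
  finally have "card (up_set L le m) + card C \<le> card L + 1"
    using \<open>2 \<le> card C\<close> card_mono[OF finite_carrier \<open>C \<subseteq> L\<close>] by linarith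
  with ji show thesis by (rule that)
qed

end

lemma counterexample_length_less_up_set:
  assumes "counterexample L le" "join_irreducible L le j"
  shows "lattice_length L le < card (up_set L le j)"
proof -
  interpret finite_lattice_on L le
    using assms(1) by unfold_locales (simp add: counterexample_def)
  have large: "card L < 2 * card (up_set L le i)" if "join_irreducible L le i" for i
    using assms(1) that by (simp add: counterexample_def)
  obtain C where C: "is_chain L le C" "card C = lattice_length L le + 1"
    by (rule ex_chain_card_length)
  show ?thesis
  proof (cases "lattice_length L le = 0")
    case True
    have "j \<in> L" using assms(2) by (simp add: join_irreducible_def)
    then have "j \<in> up_set L le j" by (simp add: up_set_def refl_le)
    moreover have "finite (up_set L le j)" using finite_carrier by (simp add: up_set_def)
    ultimately have "0 < card (up_set L le j)" by (subst card_gt_0_iff) blast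
    with True show ?thesis by simp
  next
    case False
    then have "2 \<le> card C" using C(2) by simp
    then obtain m where "join_irreducible L le m"
      "card (up_set L le m) + card C \<le> card L + 1"
      by (rule chain_ex_join_irreducible_small_up_set[OF C(1)])
    then show ?thesis using large[of m] large[OF assms(2)] C(2) by linarith
  qed
qed

theorem theorem2p7:
  fixes L :: "'a set" and le :: "'a \<Rightarrow> 'a \<Rightarrow> bool"
  assumes "min_counterexample L le"
  shows "\<forall>j. join_irreducible L le j \<longrightarrow> card (up_set L le j) > lattice_length L le"
proof -
  have "counterexample L le" using assms by (simp add: min_counterexample_def)
  then show ?thesis by (simp add: counterexample_length_less_up_set)
qed

end
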